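(* Let $A=\{2^{i+1}-1 : i\ge 0\}=\{1,3,7,15,\dots\}$. Then for every $n\ge 1$, $\mathrm{Total}(n,A)=2^n-n$.
   Context: For an integer $n\ge 0$ and a set $A$ of positive integers with $1\in A$, the abstract generalized 2048 game $\mathrm{AGG}(n,A)$ is played on $n$ indistinguishable cells. A position assigns to each cell either nothing (empty) or a tile with a value in $A$; the initial position has all cells empty. A step, performable from any position with at least one empty cell, consists of: (i) placing a new tile of value $1$ into a chosen empty cell; then (ii) optionally choosing pairwise disjoint sets of nonempty cells, each with tile-value sum in $A$, and merging each set into a single tile of that sum placed in one of its cells, the other cells of the set becoming empty. The game ends when after a step all cells are nonempty. A position is reachable if obtainable from the initial position by finitely many steps; its total value is the sum of its tile values. $\mathrm{Total}(n,A)$ is the supremum of total values of reachable positions of $\mathrm{AGG}(n,A)$. *)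

theory Defs
  imports Main "HOL-Library.Multiset" "HOL-Library.Extended_Nat"
begin

text \<open>Cells are indistinguishable, so a position is the multiset of tile values
  on the nonempty cells; the number of empty cells is n minus its size.\<close>

definition merge_result :: "nat set \<Rightarrow> nat multiset \<Rightarrow> nat multiset \<Rightarrow> bool" where
  "merge_result A M M' \<longleftrightarrow>
     (\<exists>R Ss. M = R + sum_list Ss \<and>
             (\<forall>S\<in>set Ss. S \<noteq> {#} \<and> sum_mset S \<in> A) \<and>
             M' = R + mset (map sum_mset Ss))"

definition game_step :: "nat \<Rightarrow> nat set \<Rightarrow> nat multiset \<Rightarrow> nat multiset \<Rightarrow> bool" where
  "game_step n A P Q \<longleftrightarrow> size P < n \<and> merge_result A (P + {#1#}) Q"

inductive reachable :: "nat \<Rightarrow> nat set \<Rightarrow> nat multiset \<Rightarrow> bool" for n A where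
  init: "reachable n A {#}"
| step: "reachable n A P \<Longrightarrow> game_step n A P Q \<Longrightarrow> reachable n A Q"

definition Total :: "nat \<Rightarrow> nat set \<Rightarrow> enat" where
  "Total n A = (SUP P\<in>{P. reachable n A P}. enat (sum_mset P))"

end

theory Submission
  imports Defs
begin

text \<open>Give a tile of value \<open>v\<close> the weight \<open>v + 1\<close> and an empty cell the weight \<open>1\<close>, so the
  total weight of a position is its total value plus \<open>n\<close>. When every element of \<open>A\<close> is
  of the form \<open>2 ^ k - 1\<close>, all tiles weigh powers of two, and it stays true that for every
  \<open>p \<le> n\<close> some \<open>p\<close> cells have total weight at most \<open>2 ^ p\<close>: a merge keeps the weight of
  the group and frees cells of weight \<open>1\<close>, and a new tile turns a weight \<open>1\<close> into \<open>2\<close>,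
  which fits because \<open>p - 1\<close> powers of two never add up to \<open>2 ^ p - 1\<close>. For \<open>p = n\<close>
  this bounds the value by \<open>2 ^ n - n\<close>, which the position
  \<open>2 ^ (n - 1) - 1, \<dots>, 7, 3, 1, 1\<close> attains.\<close>

lemma mset_subset_eq_add_split:
  assumes "Q \<subseteq># X + Y"
  obtains Q1 Q2 where "Q = Q1 + Q2" "Q1 \<subseteq># X" "Q2 \<subseteq># Y"
proof
  show "Q = (Q \<inter># X) + (Q - X)" by (rule multiset_eqI) simp
  show "Q \<inter># X \<subseteq># X" by simp
  show "Q - X \<subseteq># Y"
    using assms by (simp add: subset_eq_diff_conv add.commute)
qed

lemma size_le_sum_mset:
  fixes M :: "nat multiset"
  assumes "\<And>x. x \<in># M \<Longrightarrow> 1 \<le> x"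
  shows "size M \<le> sum_mset M"
  using assms
proof (induction M)
  case (add x M)
  then have "1 \<le> x" "size M \<le> sum_mset M" by auto
  then show ?case by simp
qed simp

lemma sum_mset_image_Suc: "sum_mset (image_mset Suc M) = sum_mset M + size M"
  by (induction M) auto

lemma replicate_mset_add: "replicate_mset (a + b) x = replicate_mset a x + replicate_mset b x"
  by (induction a) auto

lemma card_eq_if_sum_power2_eq_mask:
  assumes "finite K" "(\<Sum>k\<in>K. (2::nat) ^ k) = 2 ^ p - 1"
  shows "card K = p"
proof -
  have "K \<subseteq> {..<p}"
  proof
    fix k assume "k \<in> K"
    then have "(2::nat) ^ k \<le> 2 ^ p - 1"
      using member_le_sum[of k K "\<lambda>k. (2::nat) ^ k"] assms by simp
    then have "(2::nat) ^ k < 2 ^ p"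
      by (metis diff_less le_less_trans pos2 zero_less_one zero_less_power)
    then show "k \<in> {..<p}" by simp
  qed
  moreover have "\<not> K \<subset> {..<p}"
  proof
    assume "K \<subset> {..<p}"
    then obtain b where "b \<in> {..<p} - K" by blast
    then have "(\<Sum>k\<in>K. (2::nat) ^ k) < (\<Sum>k<p. 2 ^ k)"
      using \<open>K \<subset> {..<p}\<close> by (intro sum_strict_mono2) auto
    then show False
      using assms(2) sum_power2 by (simp add: atLeast0LessThan)
  qed
  ultimately show ?thesis by auto
qed

lemma card_eq_if_sum_powers_of_two:
  assumes "finite F" "\<forall>x\<in>F. \<exists>k. x = (2::nat) ^ k" "\<Sum>F = 2 ^ p - 1"
  shows "card F = p"
proof -
  define K where "K = {k. (2::nat) ^ k \<in> F}"
  have F: "F = (\<lambda>k. 2 ^ k) ` K" and inj: "inj_on (\<lambda>k. (2::nat) ^ k) K"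
    using assms(2) by (auto simp: K_def inj_on_def)
  then have "finite K" using assms(1) finite_imageD by metis
  moreover have "(\<Sum>k\<in>K. (2::nat) ^ k) = 2 ^ p - 1"
    using assms(3) by (simp add: F sum.reindex[OF inj])
  ultimately show ?thesis by (simp add: F card_image[OF inj] card_eq_if_sum_power2_eq_mask)
qed

text \<open>Merging equal summands as binary carries reduces to the distinct case, where the
  summands are exactly \<open>1, 2, \<dots>, 2 ^ (p - 1)\<close>.\<close>
lemma size_ge_if_sum_mset_powers_of_two:
  assumes "\<forall>x\<in>#M. \<exists>k. x = (2::nat) ^ k" "sum_mset M = 2 ^ p - 1"
  shows "p \<le> size M"
  using assms
proof (induction "size M" arbitrary: M rule: less_induct)
  case less
  show ?case
  proof (cases "\<exists>x. 2 \<le> count M x")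
    case True
    then obtain x where "2 \<le> count M x" by blast
    then have "{#x, x#} \<subseteq># M" by (simp add: subseteq_mset_def)
    then obtain M0 where M: "M = M0 + {#x, x#}"
      by (metis mset_subset_eq_exists_conv add.commute)
    obtain k where "x = 2 ^ k" using less.prems(1) M by auto
    then have "\<forall>y\<in>#M0 + {#2 * x#}. \<exists>k. y = (2::nat) ^ k"
      using less.prems(1) M by (auto intro: exI[of _ "Suc k"])
    moreover have "sum_mset (M0 + {#2 * x#}) = 2 ^ p - 1"
      using less.prems(2) M by simp
    moreover have "size (M0 + {#2 * x#}) < size M" using M by simp
    ultimately have "p \<le> size (M0 + {#2 * x#})"
      using less.hyps by blast
    then show ?thesis using M by simp
  next
    case False
    then have "\<forall>x. count M x \<le> 1" by (simp add: not_le numeral_2_eq_2 less_Suc_eq_le)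
    have M: "M = mset_set (set_mset M)"
    proof (rule multiset_eqI)
      fix x
      show "count M x = count (mset_set (set_mset M)) x"
        using \<open>\<forall>x. count M x \<le> 1\<close>[rule_format, of x]
        by (cases "x \<in># M") (auto simp: count_eq_zero_iff dest: le_antisym[OF _ Suc_leI])
    qed
    have "\<Sum>(set_mset M) = 2 ^ p - 1"
      using less.prems(2) by (subst (asm) M) (simp add: sum_unfold_sum_mset)
    then have "card (set_mset M) = p"
      using less.prems(1) by (intro card_eq_if_sum_powers_of_two) auto
    then show ?thesis by (subst M) simp
  qed
qed

definition light :: "nat \<Rightarrow> nat multiset \<Rightarrow> bool" where
  "light n W \<longleftrightarrow> (\<forall>p\<le>n. \<exists>Q. Q \<subseteq># W \<and> size Q = p \<and> sum_mset Q \<le> 2 ^ p)"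

lemma light_replicate_one: "light n (replicate_mset n 1)"
  unfolding light_def
proof (intro allI impI)
  fix p assume "p \<le> n"
  then show "\<exists>Q. Q \<subseteq># replicate_mset n (1::nat) \<and> size Q = p \<and> sum_mset Q \<le> 2 ^ p"
    by (intro exI[of _ "replicate_mset p (1::nat)"]) (auto simp: subseteq_mset_def less_imp_le[OF less_exp])
qed

text \<open>A witness \<open>Q\<close> that contains all of \<open>G\<close> uses the merged group instead; otherwise
  its part inside \<open>G\<close> is traded for ones, which does not increase its sum.\<close>
lemma light_merge:
  assumes "light n (X + G)" "G \<noteq> {#}" "\<And>x. x \<in># G \<Longrightarrow> 1 \<le> x"
  shows "light n (X + {#sum_mset G - (size G - 1)#} + replicate_mset (size G - 1) 1)"
  unfolding light_def
proof (intro allI impI)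
  fix p assume "p \<le> n"
  then obtain Q where Q: "Q \<subseteq># X + G" "size Q = p" "sum_mset Q \<le> 2 ^ p"
    using assms(1) unfolding light_def by blast
  obtain Q1 Q2 where Q12: "Q = Q1 + Q2" "Q1 \<subseteq># X" "Q2 \<subseteq># G"
    using Q(1) by (rule mset_subset_eq_add_split)
  define G' where "G' = {#sum_mset G - (size G - 1)#} + replicate_mset (size G - 1) 1"
  have "size G \<le> sum_mset G" "1 \<le> size G"
    using assms(2,3) size_le_sum_mset by (auto simp: Suc_le_eq nonempty_has_size)
  then have G': "size G' = size G" "sum_mset G' = sum_mset G"
    by (auto simp: G'_def)
  have "\<exists>Q'. Q' \<subseteq># G' \<and> size Q' = size Q2 \<and> sum_mset Q' \<le> sum_mset Q2"
  proof (cases "Q2 = G")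
    case True
    then show ?thesis using G' by (intro exI[of _ G']) simp
  next
    case False
    then have "size Q2 < size G"
      using Q12(3) by (intro mset_subset_size) (simp add: subset_mset.le_neq_trans)
    moreover have "size Q2 \<le> sum_mset Q2"
      using assms(3) Q12(3) by (intro size_le_sum_mset) (auto dest: mset_subset_eqD)
    ultimately show ?thesis
      by (intro exI[of _ "replicate_mset (size Q2) 1"]) (auto simp: G'_def subseteq_mset_def)
  qed
  then obtain Q2' where "Q2' \<subseteq># G'" "size Q2' = size Q2" "sum_mset Q2' \<le> sum_mset Q2"
    by blast
  with Q Q12 have "Q1 + Q2' \<subseteq># X + G'" "size (Q1 + Q2') = p" "sum_mset (Q1 + Q2') \<le> 2 ^ p"
    by (auto intro: subset_mset.add_mono)
  then show "\<exists>Q. Q \<subseteq># X + {#sum_mset G - (size G - 1)#} + replicate_mset (size G - 1) 1 \<and>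
      size Q = p \<and> sum_mset Q \<le> 2 ^ p"
    by (auto simp: G'_def add.assoc)
qed

lemma light_place:
  assumes "light n (X + {#1#})" "\<forall>x\<in>#X. \<exists>k. x = (2::nat) ^ k"
  shows "light n (X + {#2#})"
  unfolding light_def
proof (intro allI impI)
  fix p assume "p \<le> n"
  then obtain Q where Q: "Q \<subseteq># X + {#1#}" "size Q = p" "sum_mset Q \<le> 2 ^ p"
    using assms(1) unfolding light_def by blast
  obtain Q1 Q2 where Q12: "Q = Q1 + Q2" "Q1 \<subseteq># X" "Q2 \<subseteq># {#1#}"
    using Q(1) by (rule mset_subset_eq_add_split)
  then consider "Q2 = {#}" | "Q2 = {#1#}"
    by (metis nonempty_subseteq_mset_eq_single)
  then show "\<exists>Q. Q \<subseteq># X + {#2#} \<and> size Q = p \<and> sum_mset Q \<le> 2 ^ p"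
  proof cases
    case 1
    then show ?thesis
      using Q Q12 by (intro exI[of _ Q]) (auto intro: subset_mset.order_trans)
  next
    case 2
    then have "size Q1 < p" using Q Q12 by simp
    moreover have "\<forall>x\<in>#Q1. \<exists>k. x = (2::nat) ^ k"
      using assms(2) Q12(2) by (auto dest: mset_subset_eqD)
    ultimately have "sum_mset Q1 \<noteq> 2 ^ p - 1"
      using size_ge_if_sum_mset_powers_of_two by fastforce
    moreover have "sum_mset Q1 + 1 \<le> 2 ^ p" using Q Q12 2 by simp
    ultimately have "sum_mset (Q1 + {#2#}) \<le> 2 ^ p" by simp
    moreover have "size (Q1 + {#2#}) = p" using Q Q12 2 by simp
    ultimately show ?thesis
      using Q12(2) by (intro exI[of _ "Q1 + {#2#}"]) simp
  qed
qed

definition weights :: "nat \<Rightarrow> nat multiset \<Rightarrow> nat multiset" where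
  "weights n P = image_mset Suc P + replicate_mset (n - size P) 1"

definition good_position :: "nat \<Rightarrow> nat multiset \<Rightarrow> bool" where
  "good_position n P \<longleftrightarrow>
     size P \<le> n \<and> (\<forall>v\<in>#P. \<exists>k. Suc v = 2 ^ k) \<and> light n (weights n P)"

lemma good_position_empty: "good_position n {#}"
  using light_replicate_one by (simp add: good_position_def weights_def)

lemma good_position_place:
  assumes "good_position n P" "size P < n"
  shows "good_position n (P + {#1#})"
proof -
  define X where "X = image_mset Suc P + replicate_mset (n - size P - 1) 1"
  have "n - size P = (n - size P - 1) + 1" using assms(2) by simp
  then have "weights n P = X + {#1#}"
    unfolding weights_def X_def by (metis replicate_mset_add replicate_mset_0
        replicate_mset_Suc add.assoc add_mset_add_single Suc_eq_plus1)
  moreover have "\<forall>x\<in>#X. \<exists>k. x = (2::nat) ^ k"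
    using assms(1) by (auto simp: X_def good_position_def intro: exI[of _ 0])
  ultimately have "light n (X + {#2#})"
    using assms(1) light_place by (simp add: good_position_def)
  moreover have "weights n (P + {#1#}) = X + {#2#}"
    by (simp add: weights_def X_def)
  ultimately show ?thesis
    using assms by (auto simp: good_position_def intro: exI[of _ 1])
qed

lemma good_position_merge_group:
  assumes "good_position n (R + S)" "S \<noteq> {#}" "\<exists>k. Suc (sum_mset S) = 2 ^ k"
  shows "good_position n (R + {#sum_mset S#})"
proof -
  define X where "X = image_mset Suc R + replicate_mset (n - size R - size S) 1"
  define G where "G = image_mset Suc S"
  have size_RS: "size R + size S \<le> n"
    using assms(1) by (simp add: good_position_def)
  have "1 \<le> size S" using assms(2) by (simp add: Suc_le_eq nonempty_has_size)
  have "weights n (R + S) = X + G"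
    by (simp add: weights_def X_def G_def add_ac diff_diff_add)
  then have "light n (X + G)" using assms(1) by (simp add: good_position_def)
  moreover have "G \<noteq> {#}" "\<And>x. x \<in># G \<Longrightarrow> 1 \<le> x"
    using assms(2) by (auto simp: G_def)
  ultimately have "light n (X + {#sum_mset G - (size G - 1)#} + replicate_mset (size G - 1) 1)"
    by (rule light_merge)
  moreover have "sum_mset G - (size G - 1) = Suc (sum_mset S)"
    using \<open>1 \<le> size S\<close> by (simp add: G_def sum_mset_image_Suc)
  moreover have "n - size (R + {#sum_mset S#}) = (n - size R - size S) + (size S - 1)"
    using size_RS \<open>1 \<le> size S\<close> by simp
  ultimately have "light n (weights n (R + {#sum_mset S#}))"
    by (simp add: weights_def X_def G_def replicate_mset_add add_ac)
  then show ?thesis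
    using assms(1,3) size_RS \<open>1 \<le> size S\<close> by (auto simp: good_position_def)
qed

lemma good_position_merge:
  assumes "good_position n (R + sum_list Ss)"
    and "\<forall>S\<in>set Ss. S \<noteq> {#} \<and> (\<exists>k. Suc (sum_mset S) = 2 ^ k)"
  shows "good_position n (R + mset (map sum_mset Ss))"
  using assms
proof (induction Ss arbitrary: R)
  case (Cons S Ss)
  have "good_position n ((R + sum_list Ss) + S)"
    using Cons.prems(1) by (simp add: add_ac)
  then have "good_position n ((R + {#sum_mset S#}) + sum_list Ss)"
    using Cons.prems(2) good_position_merge_group by (simp add: add_ac)
  then have "good_position n ((R + {#sum_mset S#}) + mset (map sum_mset Ss))"
    using Cons.prems(2) Cons.IH[of "R + {#sum_mset S#}"] by simp
  then show ?case by (simp add: add_ac)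
qed simp

lemma good_position_if_reachable:
  assumes "reachable n A P" "\<forall>a\<in>A. \<exists>k. Suc a = 2 ^ k"
  shows "good_position n P"
  using assms(1)
proof (induction rule: reachable.induct)
  case init
  then show ?case by (rule good_position_empty)
next
  case (step P Q)
  then have "size P < n" and "merge_result A (P + {#1#}) Q"
    by (auto simp: game_step_def)
  then obtain R Ss where "P + {#1#} = R + sum_list Ss" "Q = R + mset (map sum_mset Ss)"
    and "\<forall>S\<in>set Ss. S \<noteq> {#} \<and> sum_mset S \<in> A"
    unfolding merge_result_def by blast
  moreover have "good_position n (P + {#1#})"
    using good_position_place step.IH \<open>size P < n\<close> by blast
  ultimately show ?case
    using assms(2) good_position_merge by metis
qed

lemma sum_mset_le_if_good_position:
  assumes "good_position n P"
  shows "sum_mset P \<le> 2 ^ n - n"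
proof -
  have "size P \<le> n" "light n (weights n P)"
    using assms by (auto simp: good_position_def)
  then obtain Q where Q: "Q \<subseteq># weights n P" "size Q = n" "sum_mset Q \<le> 2 ^ n"
    unfolding light_def by blast
  moreover have "size (weights n P) = n"
    using \<open>size P \<le> n\<close> by (simp add: weights_def)
  ultimately have "Q = weights n P"
    by (metis mset_subset_size subset_mset.le_neq_trans less_irrefl)
  moreover have "sum_mset (weights n P) = sum_mset P + n"
    using \<open>size P \<le> n\<close> by (simp add: weights_def sum_mset_image_Suc)
  ultimately show ?thesis using Q(3) by simp
qed

lemma Total_eqI:
  assumes "\<And>P. reachable n A P \<Longrightarrow> sum_mset P \<le> t"
    and "reachable n A P\<^sub>0" "sum_mset P\<^sub>0 = t"
  shows "Total n A = enat t"
  unfolding Total_def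
proof (rule antisym)
  show "(SUP P\<in>{P. reachable n A P}. enat (sum_mset P)) \<le> enat t"
    using assms(1) by (auto intro: SUP_least)
  show "enat t \<le> (SUP P\<in>{P. reachable n A P}. enat (sum_mset P))"
    using assms(2,3) by (auto intro: SUP_upper2)
qed

lemma reachable_place:
  assumes "reachable n A R" "size R < n"
  shows "reachable n A (R + {#1#})"
proof (rule reachable.step[OF assms(1)])
  show "game_step n A R (R + {#1#})"
    using assms(2) unfolding game_step_def merge_result_def
    by (auto intro!: exI[of _ "R + {#1#}"] exI[of _ "[]"])
qed

text \<open>Two tiles \<open>2 ^ j - 1\<close> and a fresh \<open>1\<close> merge into \<open>2 ^ (j + 1) - 1\<close>.\<close>
lemma reachable_add_mersenne:
  assumes "\<forall>i. 2 ^ Suc i - 1 \<in> A"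
  shows "1 \<le> j \<Longrightarrow> reachable n A R \<Longrightarrow> size R + j + 1 \<le> n \<Longrightarrow>
    reachable n A (R + {#2 ^ j - 1#})"
proof (induction j arbitrary: R rule: nat_induct_at_least)
  case base
  then show ?case using reachable_place by simp
next
  case (Suc j)
  define x :: nat where "x = 2 ^ j - 1"
  have "(1::nat) \<le> 2 ^ j" "(2::nat) ^ Suc j = 2 ^ j + 2 ^ j" by simp_all
  then have mersenne_Suc: "2 ^ Suc j - 1 = x + x + 1" unfolding x_def by linarith
  then have "x + x + 1 \<in> A" using assms by metis
  have "reachable n A (R + {#x#})"
    using Suc by (simp add: x_def)
  then have "reachable n A (R + {#x#} + {#x#})"
    using Suc by (simp add: x_def)
  moreover have "game_step n A (R + {#x#} + {#x#}) (R + {#2 ^ Suc j - 1#})"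
    unfolding game_step_def merge_result_def
    using Suc.prems(2) Suc.hyps \<open>x + x + 1 \<in> A\<close> mersenne_Suc
    by (intro conjI exI[of _ R] exI[of _ "[{#x, x, 1#}]"]) simp_all
  ultimately show ?case by (rule reachable.step)
qed

text \<open>Fill the \<open>m\<close> free cells with \<open>2 ^ (m - 1) - 1, \<dots>, 7, 3, 1, 1\<close>.\<close>
lemma reachable_fill:
  assumes "\<forall>i. 2 ^ Suc i - 1 \<in> A"
  shows "1 \<le> m \<Longrightarrow> reachable n A R \<Longrightarrow> size R + m \<le> n \<Longrightarrow>
    \<exists>Q. reachable n A Q \<and> sum_mset Q = sum_mset R + (2 ^ m - m)"
proof (induction m arbitrary: R rule: nat_induct_at_least)
  case base
  then show ?case using reachable_place by fastforce
next
  case (Suc m)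
  then have "reachable n A (R + {#2 ^ m - 1#})"
    using reachable_add_mersenne[OF assms] by simp
  then obtain Q where "reachable n A Q"
    and "sum_mset Q = sum_mset R + (2 ^ m - 1) + (2 ^ m - m)"
    using Suc by fastforce
  moreover have "(2 ^ m - 1) + (2 ^ m - m) = (2::nat) ^ Suc m - Suc m"
    using less_exp[of m] by simp
  ultimately show ?case by (metis add.assoc)
qed

theorem mainTheorem15:
  fixes n :: nat
  assumes "n \<ge> 1"
  shows "Total n {2 ^ (i + 1) - 1 | i. True} = enat (2 ^ n - n)"
proof -
  let ?A = "{2 ^ (i + 1) - 1 | i. True} :: nat set"
  have mersenne: "\<forall>i. 2 ^ Suc i - 1 \<in> ?A" by auto
  have "\<forall>a\<in>?A. \<exists>k. Suc a = 2 ^ k" by (auto intro: exI[of _ "Suc _"])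
  then have "sum_mset P \<le> 2 ^ n - n" if "reachable n ?A P" for P
    using that by (intro sum_mset_le_if_good_position good_position_if_reachable)
  moreover obtain P where "reachable n ?A P" "sum_mset P = 2 ^ n - n"
    using reachable_fill[OF mersenne assms reachable.init] by auto
  ultimately show ?thesis by (rule Total_eqI)
qed

end
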